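(* Let $(\Omega,\mathcal F)$ be a measurable space and let $\succeq$ be a preference order on $\mathcal L^\infty(\Omega,\mathcal F)$ satisfying (SM) and (PC). Then the following are equivalent: (i) $\succeq$ satisfies (ST); (ii) every representing functional $T$ for $\succeq$ is conditionable, i.e. conditionable on every sub-$\sigma$-algebra $\mathcal G\subseteq\mathcal F$; (iii) every representing functional $T$ for $\succeq$ is conditionable on $\sigma(A)=\{\varnothing,\Omega,A,A^c\}$ for every $A\in\mathcal F$.
   Context: $\mathcal L^\infty(\Omega,\mathcal F)$ is the set of bounded $\mathcal F$-measurable functions $\Omega\to\mathbb R$ (bounded everywhere); constants $x\in\mathbb R$ are identified with constant functions. A preference order $\succeq$ is a complete and transitive binary relation on it; $f\succ g$ means $f\succeq g$ and not $g\succeq f$; $f\sim g$ means $f\succeq g$ and $g\succeq f$. The null events are $\mathcal N_\succeq=\{A\in\mathcal F: f1_A+g1_{A^c}\sim g\ \forall f,g\}$; an event is non-null if it is not in $\mathcal N_\succeq$. (SM): for every non-null $A\in\mathcal F$, every $f$ and constants $x>y$: $x1_A+f1_{A^c}\succ y1_A+f1_{A^c}$. (ST): for all $f,g,h$ and $A\in\mathcal F$, if $f1_A+h1_{A^c}\succeq g1_A+h1_{A^c}$ then $f1_A+\tilde h1_{A^c}\succeq g1_A+\tilde h1_{A^c}$ for every $\tilde h$. (PC): for every uniformly bounded sequence $(f_n)$ with $f_n(\omega)\to f(\omega)$ for all $\omega$, and every $g$ with $g\succ f$ (resp. $f\succ g$), there is $N$ with $g\succ f_n$ (resp. $f_n\succ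 g$) for all $n>N$. A functional $T:\mathcal L^\infty(\Omega,\mathcal F)\to\mathbb R$ represents $\succeq$ if $T(f)\ge T(g)\iff f\succeq g$. $T$ is conditionable on a sub-$\sigma$-algebra $\mathcal G$ if for every $f\in\mathcal L^\infty(\Omega,\mathcal F)$ there exists $g\in\mathcal L^\infty(\Omega,\mathcal G)$ with $T(f1_A)=T(g1_A)$ for all $A\in\mathcal G$. *)

theory Defs
  imports "HOL-Analysis.Analysis"
begin

text \<open>The sample space Omega is the universe of the type 'a; F is a sigma-algebra on it.\<close>

definition Fmeasurable :: "'a set set \<Rightarrow> ('a \<Rightarrow> real) \<Rightarrow> bool" where
  "Fmeasurable F f \<longleftrightarrow> (\<forall>B \<in> sets borel. f -` B \<in> F)"

definition Linf :: "'a set set \<Rightarrow> ('a \<Rightarrow> real) set" where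
  "Linf F = {f. Fmeasurable F f \<and> (\<exists>C. \<forall>\<omega>. \<bar>f \<omega>\<bar> \<le> C)}"

definition const_fun :: "real \<Rightarrow> 'a \<Rightarrow> real" where
  "const_fun x = (\<lambda>_. x)"

definition paste :: "'a set \<Rightarrow> ('a \<Rightarrow> real) \<Rightarrow> ('a \<Rightarrow> real) \<Rightarrow> 'a \<Rightarrow> real" where
  "paste A f g = (\<lambda>\<omega>. if \<omega> \<in> A then f \<omega> else g \<omega>)"

definition preference_order :: "'a set set \<Rightarrow> (('a \<Rightarrow> real) \<Rightarrow> ('a \<Rightarrow> real) \<Rightarrow> bool) \<Rightarrow> bool" where
  "preference_order F R \<longleftrightarrow>
     (\<forall>f \<in> Linf F. \<forall>g \<in> Linf F. R f g \<or> R g f) \<and>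
     (\<forall>f \<in> Linf F. \<forall>g \<in> Linf F. \<forall>h \<in> Linf F. R f g \<longrightarrow> R g h \<longrightarrow> R f h)"

definition strict_pref where "strict_pref R f g \<longleftrightarrow> R f g \<and> \<not> R g f"
definition indiff where "indiff R f g \<longleftrightarrow> R f g \<and> R g f"

definition null_events :: "'a set set \<Rightarrow> (('a \<Rightarrow> real) \<Rightarrow> ('a \<Rightarrow> real) \<Rightarrow> bool) \<Rightarrow> 'a set set" where
  "null_events F R = {A \<in> F. \<forall>f \<in> Linf F. \<forall>g \<in> Linf F. indiff R (paste A f g) g}"

definition SM :: "'a set set \<Rightarrow> (('a \<Rightarrow> real) \<Rightarrow> ('a \<Rightarrow> real) \<Rightarrow> bool) \<Rightarrow> bool" where
  "SM F R \<longleftrightarrow> (\<forall>A \<in> F. A \<notin> null_events F R \<longrightarrow>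
     (\<forall>f \<in> Linf F. \<forall>x y::real. x > y \<longrightarrow>
        strict_pref R (paste A (const_fun x) f) (paste A (const_fun y) f)))"

definition ST :: "'a set set \<Rightarrow> (('a \<Rightarrow> real) \<Rightarrow> ('a \<Rightarrow> real) \<Rightarrow> bool) \<Rightarrow> bool" where
  "ST F R \<longleftrightarrow> (\<forall>f \<in> Linf F. \<forall>g \<in> Linf F. \<forall>h \<in> Linf F. \<forall>A \<in> F.
     R (paste A f h) (paste A g h) \<longrightarrow>
     (\<forall>h' \<in> Linf F. R (paste A f h') (paste A g h')))"

definition PC :: "'a set set \<Rightarrow> (('a \<Rightarrow> real) \<Rightarrow> ('a \<Rightarrow> real) \<Rightarrow> bool) \<Rightarrow> bool" where
  "PC F R \<longleftrightarrow> (\<forall>fs :: nat \<Rightarrow> 'a \<Rightarrow> real. \<forall>f \<in> Linf F.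
     (\<forall>n. fs n \<in> Linf F) \<longrightarrow> (\<exists>C. \<forall>n \<omega>. \<bar>fs n \<omega>\<bar> \<le> C) \<longrightarrow>
     (\<forall>\<omega>. (\<lambda>n. fs n \<omega>) \<longlonglongrightarrow> f \<omega>) \<longrightarrow>
     (\<forall>g \<in> Linf F.
        (strict_pref R g f \<longrightarrow> (\<exists>N. \<forall>n > N. strict_pref R g (fs n))) \<and>
        (strict_pref R f g \<longrightarrow> (\<exists>N. \<forall>n > N. strict_pref R (fs n) g))))"

definition represents :: "'a set set \<Rightarrow> (('a \<Rightarrow> real) \<Rightarrow> real) \<Rightarrow> (('a \<Rightarrow> real) \<Rightarrow> ('a \<Rightarrow> real) \<Rightarrow> bool) \<Rightarrow> bool" where
  "represents F T R \<longleftrightarrow> (\<forall>f \<in> Linf F. \<forall>g \<in> Linf F. T f \<ge> T g \<longleftrightarrow> R f g)"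

definition conditionable_on :: "'a set set \<Rightarrow> (('a \<Rightarrow> real) \<Rightarrow> real) \<Rightarrow> 'a set set \<Rightarrow> bool" where
  "conditionable_on F T G \<longleftrightarrow> (\<forall>f \<in> Linf F. \<exists>g \<in> Linf G.
     \<forall>A \<in> G. T (paste A f (const_fun 0)) = T (paste A g (const_fun 0)))"

definition sub_sigma :: "'a set set \<Rightarrow> 'a set set \<Rightarrow> bool" where
  "sub_sigma G F \<longleftrightarrow> sigma_algebra UNIV G \<and> G \<subseteq> F"

definition sigma_of_set :: "'a set \<Rightarrow> 'a set set" where
  "sigma_of_set A = {{}, UNIV, A, - A}"

end

theory Submission
  imports Defs
begin

text \<open>
  For (iii) implies (i), condition a representing
  functional on the four-element algebra generated by an event E such that E and its complement
  are non-null: every act becomes indifferent to a two-valued act, and by SM the value taken on E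
  is unique, hence depends only on the restriction of the act to E; comparing these values gives
  the sure-thing principle. Representing functionals exist because, by monotonicity and PC, every
  act has a certainty equivalent.

  For (i) implies (ii), ST makes "a is preferred to b on every G-event inside X" behave like the
  positivity of a signed measure: it is closed under countable unions by PC, and disjoint non-null
  events form a countable family. A Hahn decomposition then yields, for each rational q, a G-event
  on which f is conditionally above q and off which it is conditionally below q. Intersecting
  these to make them decreasing in q, the conditional version of f is
  g \<omega> = sup {q \<in> \<rat>. \<omega> \<in> D q}: on every G-event, f is conditionally between g - 1/(m+1) and
  g + 1/(m+1), and PC lets m tend to infinity.
\<close>

lemma Linf_iff_borel_measurable:
  assumes "sigma_algebra UNIV F"
  shows "f \<in> Linf F \<longleftrightarrow> f \<in> borel_measurable (sigma UNIV F) \<and> (\<exists>C. \<forall>\<omega>. \<bar>f \<omega>\<bar> \<le> C)"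
proof -
  interpret sigma_algebra UNIV F by fact
  show ?thesis
    by (simp add: Linf_def Fmeasurable_def measurable_def space_measure_of_conv)
qed

lemma Linf_mono: "G \<subseteq> F \<Longrightarrow> f \<in> Linf G \<Longrightarrow> f \<in> Linf F"
  unfolding Linf_def Fmeasurable_def by blast

lemma const_fun_Linf:
  assumes "sigma_algebra UNIV G"
  shows "const_fun c \<in> Linf G"
proof -
  interpret sigma_algebra UNIV G by fact
  have "const_fun c -` B = (if c \<in> B then UNIV else {})" for B
    by (auto simp: const_fun_def)
  then show ?thesis
    by (auto simp: Linf_def Fmeasurable_def const_fun_def)
qed

lemma sub_sigma_sigma_of_set:
  assumes "sigma_algebra UNIV F" and "A \<in> F"
  shows "sub_sigma (sigma_of_set A) F"
proof -
  interpret sigma_algebra UNIV F by fact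
  have eq: "sigma_of_set A = {{}, A, UNIV - A, UNIV}"
    unfolding sigma_of_set_def by auto
  show ?thesis
    unfolding sub_sigma_def eq using sigma_algebra_single_set[of A UNIV] assms(2) by auto
qed

lemma Linf_sigma_of_set_const:
  assumes "\<psi> \<in> Linf (sigma_of_set A)" and "\<omega> \<in> A \<longleftrightarrow> \<omega>' \<in> A"
  shows "\<psi> \<omega> = \<psi> \<omega>'"
proof -
  have "\<psi> -` {\<psi> \<omega>} \<in> sigma_of_set A"
    using assms(1) by (simp add: Linf_def Fmeasurable_def)
  moreover have "\<omega> \<in> \<psi> -` {\<psi> \<omega>}" by simp
  ultimately have "\<omega>' \<in> \<psi> -` {\<psi> \<omega>}"
    using assms(2) unfolding sigma_of_set_def by auto
  then show ?thesis by simp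
qed

lemma represents_eq_iff:
  assumes "represents F T R" "f \<in> Linf F" "g \<in> Linf F"
  shows "T f = T g \<longleftrightarrow> indiff R f g"
  using assms unfolding represents_def indiff_def by (auto simp: order_eq_iff)

lemma paste_paste_same [simp]: "paste A (paste A f g) h = paste A f h"
  by (auto simp: paste_def)

lemma paste_compl_paste [simp]: "paste (- A) (paste A f g) h = paste (- A) g h"
  by (auto simp: paste_def)

lemma paste_compl: "paste (- A) f g = paste A g f"
  by (auto simp: paste_def)

lemma paste_UNIV [simp]: "paste UNIV f g = f"
  and paste_empty [simp]: "paste {} f g = g"
  and paste_same [simp]: "paste A f f = f"
  by (simp_all add: paste_def)

lemma maximal_disjoint_subfamily:
  fixes \<C> :: "'a set set"
  obtains \<S> where "\<S> \<subseteq> \<C>" "disjoint \<S>" "\<And>B. B \<in> \<C> \<Longrightarrow> (\<forall>C\<in>\<S>. disjnt B C) \<Longrightarrow> B \<in> \<S>"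
proof -
  define \<A> where "\<A> = {\<S>. \<S> \<subseteq> \<C> \<and> disjoint \<S>}"
  have "\<Union>\<K> \<in> \<A>" if "\<K> \<in> chains \<A>" for \<K>
    using that pairwise_chain_Union[of \<K>] unfolding chains_def \<A>_def by blast
  then obtain \<S> where \<S>: "\<S> \<in> \<A>" "\<forall>\<S>'\<in>\<A>. \<S> \<subseteq> \<S>' \<longrightarrow> \<S>' = \<S>"
    using Zorn_Lemma[of \<A>] by blast
  have "B \<in> \<S>" if "B \<in> \<C>" "\<forall>C\<in>\<S>. disjnt B C" for B
  proof -
    have "insert B \<S> \<in> \<A>"
      using \<S>(1) that by (auto simp: \<A>_def pairwise_insert disjnt_sym)
    then show ?thesis using \<S>(2) by blast
  qed
  then show thesis using that \<S>(1) by (auto simp: \<A>_def)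
qed

lemma paste_disjoint_family_tendsto:
  assumes "disjoint_family A"
  shows "(\<lambda>k. paste (A k) f g \<omega>) \<longlonglongrightarrow> g \<omega>"
proof (cases "\<exists>k0. \<omega> \<in> A k0")
  case True
  then obtain k0 where "\<omega> \<in> A k0" by blast
  then have "\<omega> \<notin> A k" if "k > k0" for k
    using disjoint_family_onD[OF assms, of k k0] that \<open>\<omega> \<in> A k0\<close> by auto
  then have "\<forall>\<^sub>F k in sequentially. paste (A k) f g \<omega> = g \<omega>"
    unfolding paste_def by (intro eventually_sequentiallyI[of "Suc k0"]) simp
  then show ?thesis by (rule tendsto_eventually)
next
  case False
  then show ?thesis by (simp add: paste_def)
qed

definition floor_approx :: "nat \<Rightarrow> real \<Rightarrow> real" where
  "floor_approx n x = real_of_int \<lfloor>x * real (Suc n)\<rfloor> / real (Suc n)"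

lemma floor_approx_le: "floor_approx n x \<le> x"
  by (simp add: floor_approx_def divide_le_eq)

lemma floor_approx_ge: "x - 1 / real (Suc n) \<le> floor_approx n x"
proof -
  have "(x * real (Suc n) - 1) / real (Suc n) \<le> real_of_int \<lfloor>x * real (Suc n)\<rfloor> / real (Suc n)"
    by (intro divide_right_mono) linarith+
  then show ?thesis by (simp add: floor_approx_def diff_divide_distrib)
qed

lemma floor_approx_tendsto: "(\<lambda>n. floor_approx n x) \<longlonglongrightarrow> x"
proof (rule real_tendsto_sandwich[OF _ _ LIMSEQ_inverse_real_of_nat_add_minus tendsto_const])
  show "\<forall>\<^sub>F n in sequentially. x + - inverse (real (Suc n)) \<le> floor_approx n x"
    using floor_approx_ge by (simp add: inverse_eq_divide)
qed (simp add: floor_approx_le)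

lemma finite_range_floor_approx:
  assumes "\<And>\<omega>. \<bar>f \<omega>\<bar> \<le> C"
  shows "finite (range (\<lambda>\<omega>. floor_approx n (f \<omega>)))"
proof -
  let ?k = "\<lambda>\<omega>. \<lfloor>f \<omega> * real (Suc n)\<rfloor>"
  have "?k \<omega> \<in> {\<lfloor>- C * real (Suc n)\<rfloor> .. \<lfloor>C * real (Suc n)\<rfloor>}" for \<omega>
  proof -
    have "- C \<le> f \<omega>" "f \<omega> \<le> C" using assms[of \<omega>] by linarith+
    then have "- C * real (Suc n) \<le> f \<omega> * real (Suc n)" "f \<omega> * real (Suc n) \<le> C * real (Suc n)"
      by (intro mult_right_mono; simp)+
    then show ?thesis by (auto intro!: floor_mono)
  qed
  then have "range ?k \<subseteq> {\<lfloor>- C * real (Suc n)\<rfloor> .. \<lfloor>C * real (Suc n)\<rfloor>}" by blast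
  then have "finite (range ?k)" by (rule finite_subset) simp
  moreover have "range (\<lambda>\<omega>. floor_approx n (f \<omega>)) = (\<lambda>k. real_of_int k / real (Suc n)) ` range ?k"
    by (auto simp: floor_approx_def)
  ultimately show ?thesis by simp
qed

section \<open>Decreasing families of events indexed by the rationals\<close>

definition rat_level_family :: "real \<Rightarrow> (real \<Rightarrow> 'a set) \<Rightarrow> bool" where
  "rat_level_family K D \<longleftrightarrow>
     antimono D \<and> (\<forall>q. q \<le> - K \<longrightarrow> D q = UNIV) \<and> (\<forall>q\<in>\<rat>. K < q \<longrightarrow> D q = {})"

definition level_sup :: "(real \<Rightarrow> 'a set) \<Rightarrow> 'a \<Rightarrow> real" where
  "level_sup D \<omega> = Sup {r \<in> \<rat>. \<omega> \<in> D r}"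

context
  fixes K :: real and D :: "real \<Rightarrow> 'a set"
  assumes levels: "rat_level_family K D"
begin

private lemma level_set_floor: "\<omega> \<in> D (of_int \<lfloor>- K\<rfloor>)"
  using levels by (simp add: rat_level_family_def)

private lemma level_set_above: "\<omega> \<notin> D (of_int (\<lfloor>K\<rfloor> + 1))"
  using levels by (simp add: rat_level_family_def)

private lemma level_sup_set_bdd: "bdd_above {r \<in> \<rat>. \<omega> \<in> D r}"
proof -
  have "r \<le> K" if "r \<in> \<rat>" "\<omega> \<in> D r" for r
    using that levels unfolding rat_level_family_def by (metis empty_iff not_le)
  then show ?thesis by (auto simp: bdd_above_def)
qed

lemma level_sup_ge: "r \<in> \<rat> \<Longrightarrow> \<omega> \<in> D r \<Longrightarrow> r \<le> level_sup D \<omega>"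
  unfolding level_sup_def by (rule cSup_upper) (auto intro: level_sup_set_bdd)

private lemma level_sup_set_nonempty: "{r \<in> \<rat>. \<omega> \<in> D r} \<noteq> {}"
proof -
  have "of_int \<lfloor>- K\<rfloor> \<in> {r \<in> \<rat>. \<omega> \<in> D r}"
    using level_set_floor by simp
  then show ?thesis by blast
qed

lemma level_sup_le:
  assumes "r \<in> \<rat>" "\<omega> \<notin> D r"
  shows "level_sup D \<omega> \<le> r"
  unfolding level_sup_def
proof (rule cSup_least[OF level_sup_set_nonempty])
  show "s \<le> r" if "s \<in> {r \<in> \<rat>. \<omega> \<in> D r}" for s
  proof (rule ccontr)
    assume "\<not> s \<le> r"
    then have "D s \<subseteq> D r"
      using levels antimonoD[of D r s] by (simp add: rat_level_family_def)
    then show False using that assms(2) by blast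
  qed
qed

lemma level_sup_bounded: "\<bar>level_sup D \<omega>\<bar> \<le> \<bar>K\<bar> + 1"
proof -
  have "of_int \<lfloor>- K\<rfloor> \<le> level_sup D \<omega>" "level_sup D \<omega> \<le> of_int (\<lfloor>K\<rfloor> + 1)"
    using level_sup_ge[OF _ level_set_floor] level_sup_le[OF _ level_set_above] by simp_all
  moreover have "- K - 1 < of_int \<lfloor>- K\<rfloor>" "of_int \<lfloor>K\<rfloor> \<le> K"
    using real_of_int_floor_gt_diff_one[of "- K"] of_int_floor_le[of K] by simp_all
  ultimately show ?thesis by (simp add: abs_le_iff) linarith
qed

lemma level_sup_Linf:
  assumes "sigma_algebra UNIV G" and "\<And>q. D q \<in> G"
  shows "level_sup D \<in> Linf G"
proof -
  interpret sigma_algebra UNIV G by fact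
  have "{\<omega>. t < level_sup D \<omega>} = (\<Union>r\<in>{r\<in>\<rat>. t < r}. D r)" for t
  proof (intro equalityI subsetI)
    fix \<omega> assume "\<omega> \<in> {\<omega>. t < level_sup D \<omega>}"
    then obtain s where "s \<in> {r \<in> \<rat>. \<omega> \<in> D r}" "t < s"
      using less_cSup_iff[OF level_sup_set_nonempty level_sup_set_bdd]
      unfolding level_sup_def by blast
    then show "\<omega> \<in> (\<Union>r\<in>{r\<in>\<rat>. t < r}. D r)" by blast
  next
    fix \<omega> assume "\<omega> \<in> (\<Union>r\<in>{r\<in>\<rat>. t < r}. D r)"
    then obtain r where "r \<in> \<rat>" "t < r" "\<omega> \<in> D r" by blast
    then show "\<omega> \<in> {\<omega>. t < level_sup D \<omega>}"
      using level_sup_ge[of r \<omega>] by simp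
  qed
  moreover have "countable {r\<in>\<rat>. t < r}" for t
    using countable_rat by (rule countable_subset[rotated]) blast
  then have "(\<Union>r\<in>{r\<in>\<rat>. t < r}. D r) \<in> G" for t
    by (rule countable_UN'') (rule assms(2))
  ultimately have "level_sup D \<in> borel_measurable (sigma UNIV G)"
    by (simp add: borel_measurable_iff_greater space_measure_of_conv)
  then show ?thesis
    using level_sup_bounded assms(1) by (auto simp: Linf_iff_borel_measurable)
qed

lemma level_band_exists:
  assumes "d \<in> \<rat>" "0 < d"
  obtains r where "r \<in> \<rat>" "\<omega> \<in> D r" "\<omega> \<notin> D (r + d)"
proof -
  define s where "s = real_of_int \<lfloor>- K\<rfloor>"
  obtain n where n: "K - s < real n * d"
    using reals_Archimedean3[OF assms(2)] by blast
  have rat: "s + real k * d \<in> \<rat>" for k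
    using assms(1) by (simp add: s_def)
  have "D (s + real n * d) = {}"
  proof -
    have "K < s + real n * d" using n by linarith
    then show ?thesis using levels rat[of n] unfolding rat_level_family_def by blast
  qed
  then have "\<omega> \<notin> D (s + real n * d)" by blast
  moreover have "\<omega> \<in> D (s + real 0 * d)"
    using level_set_floor by (simp add: s_def)
  ultimately obtain k where k: "\<omega> \<in> D (s + real k * d)" "\<omega> \<notin> D (s + real (Suc k) * d)"
    using ex_least_nat_less[of "\<lambda>k. \<omega> \<notin> D (s + real k * d)" n] by blast
  have "s + real (Suc k) * d = s + real k * d + d" by (simp add: distrib_right)
  then show thesis using that[OF rat[of k] k(1)] k(2) by (simp add: add.assoc)
qed

end

locale sm_pc_preference =
  fixes F :: "'a set set" and R :: "('a \<Rightarrow> real) \<Rightarrow> ('a \<Rightarrow> real) \<Rightarrow> bool"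
  assumes sigma_algebra_F: "sigma_algebra UNIV F"
    and preference: "preference_order F R"
    and SM: "SM F R"
    and PC: "PC F R"
begin

sublocale F: sigma_algebra UNIV F
  by (rule sigma_algebra_F)

abbreviation MF :: "'a measure" where
  "MF \<equiv> sigma UNIV F"

abbreviation nulls :: "'a set set" where
  "nulls \<equiv> null_events F R"

lemma compl_in_F [simp]: "A \<in> F \<Longrightarrow> - A \<in> F"
  using F.compl_sets[of A] by (simp add: Compl_eq_Diff_UNIV)

lemma Linf_measurable: "f \<in> Linf F \<Longrightarrow> f \<in> borel_measurable MF"
  by (simp add: Linf_iff_borel_measurable[OF sigma_algebra_F])

lemma Linf_bounded: "f \<in> Linf F \<Longrightarrow> \<exists>C. \<forall>\<omega>. \<bar>f \<omega>\<bar> \<le> C"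
  by (simp add: Linf_def)

lemma LinfI: "f \<in> borel_measurable MF \<Longrightarrow> (\<And>\<omega>. \<bar>f \<omega>\<bar> \<le> C) \<Longrightarrow> f \<in> Linf F"
  by (auto simp: Linf_iff_borel_measurable[OF sigma_algebra_F])

lemma Linf_common_bound:
  assumes "f \<in> Linf F" "g \<in> Linf F"
  obtains C where "\<And>\<omega>. \<bar>f \<omega>\<bar> \<le> C" "\<And>\<omega>. \<bar>g \<omega>\<bar> \<le> C"
proof -
  obtain C1 C2 where C: "\<forall>\<omega>. \<bar>f \<omega>\<bar> \<le> C1" "\<forall>\<omega>. \<bar>g \<omega>\<bar> \<le> C2"
    using assms Linf_bounded by blast
  show thesis
    by (rule that[of "max C1 C2"]) (use C in \<open>auto simp: le_max_iff_disj\<close>)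
qed

lemma const_Linf [simp]: "const_fun x \<in> Linf F"
  by (rule const_fun_Linf[OF sigma_algebra_F])

lemma paste_Linf [simp]:
  assumes "A \<in> F" "f \<in> Linf F" "g \<in> Linf F"
  shows "paste A f g \<in> Linf F"
proof -
  obtain C where "\<And>\<omega>. \<bar>f \<omega>\<bar> \<le> C" "\<And>\<omega>. \<bar>g \<omega>\<bar> \<le> C"
    using Linf_common_bound[OF assms(2,3)] by blast
  then have "\<bar>paste A f g \<omega>\<bar> \<le> C" for \<omega> by (simp add: paste_def)
  moreover have "paste A f g \<in> borel_measurable MF"
    unfolding paste_def by (rule measurable_If_set) (use assms Linf_measurable in simp_all)
  ultimately show ?thesis by (intro LinfI)
qed

lemma Linf_add_const:
  assumes g: "g \<in> Linf F"
  shows "(\<lambda>\<omega>. g \<omega> + c) \<in> Linf F"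
proof -
  obtain C where "\<And>\<omega>. \<bar>g \<omega>\<bar> \<le> C" using Linf_bounded[OF g] by blast
  then have "\<bar>g \<omega> + c\<bar> \<le> C + \<bar>c\<bar>" for \<omega>
    using abs_triangle_ineq[of "g \<omega>" c] by (meson add_right_mono order_trans)
  moreover have "(\<lambda>\<omega>. g \<omega> + c) \<in> borel_measurable MF"
    using Linf_measurable[OF g] by measurable
  ultimately show ?thesis by (intro LinfI)
qed

lemma Linf_diff_const: "g \<in> Linf F \<Longrightarrow> (\<lambda>\<omega>. g \<omega> - c) \<in> Linf F"
  using Linf_add_const[of g "- c"] by simp

lemma total: "f \<in> Linf F \<Longrightarrow> g \<in> Linf F \<Longrightarrow> R f g \<or> R g f"
  using preference unfolding preference_order_def by blast

lemma refl: "f \<in> Linf F \<Longrightarrow> R f f"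
  using total by blast

lemma trans: "R f g \<Longrightarrow> R g h \<Longrightarrow> f \<in> Linf F \<Longrightarrow> g \<in> Linf F \<Longrightarrow> h \<in> Linf F \<Longrightarrow> R f h"
  using preference unfolding preference_order_def by blast

lemma strict_pref_if_not_pref: "f \<in> Linf F \<Longrightarrow> g \<in> Linf F \<Longrightarrow> \<not> R f g \<Longrightarrow> strict_pref R g f"
  using total unfolding strict_pref_def by blast

lemma nulls_iff: "A \<in> nulls \<longleftrightarrow> A \<in> F \<and> (\<forall>f \<in> Linf F. \<forall>g \<in> Linf F. indiff R (paste A f g) g)"
  unfolding null_events_def by blast

lemma empty_in_nulls: "{} \<in> nulls"
  by (auto simp: nulls_iff indiff_def intro: refl)

lemma SM_strict:
  assumes "A \<in> F" "A \<notin> nulls" "f \<in> Linf F" "y < x"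
  shows "strict_pref R (paste A (const_fun x) f) (paste A (const_fun y) f)"
  using SM assms unfolding SM_def by blast

lemma const_le_if_pref:
  assumes "A \<in> F" "A \<notin> nulls" "f \<in> Linf F" "R (paste A (const_fun x) f) (paste A (const_fun y) f)"
  shows "y \<le> x"
proof (rule ccontr)
  assume "\<not> y \<le> x"
  then have "strict_pref R (paste A (const_fun y) f) (paste A (const_fun x) f)"
    using SM_strict[OF assms(1-3)] by simp
  then show False using assms(4) unfolding strict_pref_def by blast
qed

lemma const_eq_if_indiff:
  assumes "B \<in> F" "B \<notin> nulls" "k \<in> Linf F" "u \<in> Linf F"
    and "indiff R u (paste B (const_fun x) k)" "indiff R u (paste B (const_fun y) k)"
  shows "x = y"
proof -
  have L: "paste B (const_fun x) k \<in> Linf F" "paste B (const_fun y) k \<in> Linf F"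
    using assms(1,3) by simp_all
  have "R (paste B (const_fun x) k) (paste B (const_fun y) k)" "R (paste B (const_fun y) k) (paste B (const_fun x) k)"
    using assms(5,6) trans[OF _ _ L(1) assms(4) L(2)] trans[OF _ _ L(2) assms(4) L(1)]
    unfolding indiff_def by blast+
  then show ?thesis using const_le_if_pref[OF assms(1-3)] by (simp add: order_antisym)
qed

lemma paste_const_pref:
  assumes "A \<in> F" "y \<le> x" "f \<in> Linf F"
  shows "R (paste A (const_fun x) f) (paste A (const_fun y) f)"
proof (cases "A \<in> nulls")
  case True
  then have "R (paste A (const_fun x) f) f" "R f (paste A (const_fun y) f)"
    using assms by (auto simp: nulls_iff indiff_def)
  then show ?thesis using trans assms by (meson const_Linf paste_Linf)
next
  case nonnull: False
  show ?thesis
  proof (cases "x = y")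
    case True
    then show ?thesis using refl assms by simp
  next
    case False
    then show ?thesis
      using SM_strict[OF assms(1) nonnull assms(3), of y x] assms(2) unfolding strict_pref_def by simp
  qed
qed

lemma PC_strict_below:
  assumes "\<And>n. fs n \<in> Linf F" "\<And>n \<omega>. \<bar>fs n \<omega>\<bar> \<le> C" "\<And>\<omega>. (\<lambda>n. fs n \<omega>) \<longlonglongrightarrow> f \<omega>"
    and "f \<in> Linf F" "g \<in> Linf F" "strict_pref R g f"
  shows "\<exists>N. \<forall>n>N. strict_pref R g (fs n)"
  using PC assms unfolding PC_def by blast

lemma PC_strict_above:
  assumes "\<And>n. fs n \<in> Linf F" "\<And>n \<omega>. \<bar>fs n \<omega>\<bar> \<le> C" "\<And>\<omega>. (\<lambda>n. fs n \<omega>) \<longlonglongrightarrow> f \<omega>"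
    and "f \<in> Linf F" "g \<in> Linf F" "strict_pref R f g"
  shows "\<exists>N. \<forall>n>N. strict_pref R (fs n) g"
  using PC assms unfolding PC_def by blast

lemma pref_limit_above:
  assumes "\<And>n. fs n \<in> Linf F" "\<And>n \<omega>. \<bar>fs n \<omega>\<bar> \<le> C" "\<And>\<omega>. (\<lambda>n. fs n \<omega>) \<longlonglongrightarrow> f \<omega>"
    and "f \<in> Linf F" "g \<in> Linf F" "\<And>n. R g (fs n)"
  shows "R g f"
proof (rule ccontr)
  assume "\<not> R g f"
  then obtain N where "\<forall>n>N. strict_pref R (fs n) g"
    using PC_strict_above[OF assms(1-5)] strict_pref_if_not_pref assms(4,5) by blast
  then show False using assms(6)[of "Suc N"] unfolding strict_pref_def by blast
qed

lemma pref_limit_below: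
  assumes "\<And>n. fs n \<in> Linf F" "\<And>n \<omega>. \<bar>fs n \<omega>\<bar> \<le> C" "\<And>\<omega>. (\<lambda>n. fs n \<omega>) \<longlonglongrightarrow> f \<omega>"
    and "f \<in> Linf F" "g \<in> Linf F" "\<And>n. R (fs n) g"
  shows "R f g"
proof (rule ccontr)
  assume "\<not> R f g"
  then obtain N where "\<forall>n>N. strict_pref R g (fs n)"
    using PC_strict_below[OF assms(1-5)] strict_pref_if_not_pref assms(4,5) by blast
  then show False using assms(6)[of "Suc N"] unfolding strict_pref_def by blast
qed

lemma const_tendsto_bounded:
  fixes d :: "nat \<Rightarrow> real"
  assumes "d \<longlonglongrightarrow> 0" "\<And>n. \<bar>d n\<bar> \<le> 1"
  shows "\<And>n \<omega>. \<bar>const_fun (c + d n) \<omega>\<bar> \<le> \<bar>c\<bar> + 1"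
    and "\<And>\<omega>. (\<lambda>n. const_fun (c + d n) \<omega>) \<longlonglongrightarrow> const_fun c \<omega>"
proof -
  show "\<bar>const_fun (c + d n) \<omega>\<bar> \<le> \<bar>c\<bar> + 1" for n \<omega>
    using abs_triangle_ineq[of c "d n"] assms(2)[of n] unfolding const_fun_def by linarith
  show "(\<lambda>n. const_fun (c + d n) \<omega>) \<longlonglongrightarrow> const_fun c \<omega>" for \<omega>
    using tendsto_add[OF tendsto_const assms(1), of c] by (simp add: const_fun_def)
qed

lemma inverse_Suc_tendsto:
  shows "(\<lambda>n. inverse (real (Suc n))) \<longlonglongrightarrow> 0" "(\<lambda>n. - inverse (real (Suc n))) \<longlonglongrightarrow> 0"
    and "\<bar>inverse (real (Suc n))\<bar> \<le> 1" "\<bar>- inverse (real (Suc n))\<bar> \<le> 1"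
  using LIMSEQ_inverse_real_of_nat tendsto_minus[OF LIMSEQ_inverse_real_of_nat]
  by (simp_all add: inverse_le_1_iff)

lemma PC_strict_const_below:
  assumes "f \<in> Linf F" "strict_pref R f (const_fun c)"
  shows "\<exists>N. \<forall>n>N. strict_pref R f (const_fun (c + inverse (real (Suc n))))"
  by (rule PC_strict_below[where fs = "\<lambda>n. const_fun (c + inverse (real (Suc n)))",
        OF const_Linf const_tendsto_bounded[OF inverse_Suc_tendsto(1,3)] const_Linf assms])

lemma PC_strict_const_above:
  assumes "f \<in> Linf F" "strict_pref R (const_fun c) f"
  shows "\<exists>N. \<forall>n>N. strict_pref R (const_fun (c + - inverse (real (Suc n)))) f"
  by (rule PC_strict_above[where fs = "\<lambda>n. const_fun (c + - inverse (real (Suc n)))",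
        OF const_Linf const_tendsto_bounded[OF inverse_Suc_tendsto(2,4)] const_Linf assms])

lemma pref_mono_finite_range:
  assumes f: "f \<in> Linf F" and g: "g \<in> Linf F" and "finite (range f)" "finite (range g)"
    and le: "\<And>\<omega>. f \<omega> \<le> g \<omega>"
  shows "R g f"
proof -
  define E where "E p = {\<omega>. g \<omega> = fst p \<and> f \<omega> = snd p}" for p
  have E_in_F: "E p \<in> F" for p
  proof -
    have "E p = g -` {fst p} \<inter> f -` {snd p}" by (auto simp: E_def)
    then show ?thesis using f g by (simp add: Linf_def Fmeasurable_def F.Int)
  qed
  have "R (paste (\<Union>p\<in>P. E p) g f) f \<and> (\<Union>p\<in>P. E p) \<in> F" if "finite P" for P
    using that
  proof (induction P rule: finite_induct)
    case empty
    then show ?case using refl f by simp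
  next
    case (insert p P)
    let ?U = "\<Union>p\<in>P. E p"
    have U: "paste ?U g f \<in> Linf F" "?U \<in> F" using insert.IH f g by auto
    have step: "paste (\<Union>p\<in>insert p P. E p) g f = paste (E p) (const_fun (fst p)) (paste ?U g f)"
      by (auto simp: paste_def const_fun_def E_def fun_eq_iff)
    have "paste ?U g f = paste (E p) (const_fun (snd p)) (paste ?U g f)"
      using insert.hyps(2) by (auto simp: paste_def const_fun_def E_def fun_eq_iff)
    moreover have "fst p \<ge> snd p" if "E p \<noteq> {}"
      using that le by (auto simp: E_def) (metis)
    ultimately have "R (paste (\<Union>p\<in>insert p P. E p) g f) (paste ?U g f)"
      unfolding step using paste_const_pref[OF E_in_F _ U(1)] refl[OF U(1)]
      by (cases "E p = {}") (simp_all, metis)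
    moreover have "(\<Union>p\<in>insert p P. E p) \<in> F"
      using U(2) E_in_F[of p] by (simp add: F.Un)
    ultimately show ?case
      using trans[of _ "paste ?U g f" f] insert.IH U(1) f g by simp
  qed
  moreover have "(\<Union>p\<in>range g \<times> range f. E p) = UNIV" by (auto simp: E_def)
  ultimately show ?thesis using assms(3,4) by (metis finite_SigmaI paste_UNIV)
qed

lemma finite_range_approx_below:
  assumes "f \<in> Linf F"
  obtains fs C where "\<And>n. fs n \<in> Linf F" "\<And>n. finite (range (fs n))"
    "\<And>n \<omega>. \<bar>fs n \<omega>\<bar> \<le> C" "\<And>n \<omega>. fs n \<omega> \<le> f \<omega>" "\<And>\<omega>. (\<lambda>n. fs n \<omega>) \<longlonglongrightarrow> f \<omega>"
proof -
  obtain C where C: "\<And>\<omega>. \<bar>f \<omega>\<bar> \<le> C" using Linf_bounded[OF assms] by blast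
  have [measurable]: "f \<in> borel_measurable MF" using Linf_measurable[OF assms] .
  define fs where "fs n \<omega> = floor_approx n (f \<omega>)" for n \<omega>
  have "fs n \<in> borel_measurable MF" for n
    unfolding fs_def floor_approx_def by measurable
  moreover have "\<bar>fs n \<omega>\<bar> \<le> C + 1" for n \<omega>
  proof -
    have "1 / real (Suc n) \<le> 1" by simp
    then show ?thesis
      using floor_approx_le[of n "f \<omega>"] floor_approx_ge[of "f \<omega>" n] C[of \<omega>]
      unfolding fs_def by linarith
  qed
  ultimately show thesis
    by (intro that[of fs "C + 1"] LinfI)
      (simp_all add: fs_def finite_range_floor_approx[OF C] floor_approx_le floor_approx_tendsto)
qed

lemma finite_range_approx_above:
  assumes "f \<in> Linf F"
  obtains fs C where "\<And>n. fs n \<in> Linf F" "\<And>n. finite (range (fs n))"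
    "\<And>n \<omega>. \<bar>fs n \<omega>\<bar> \<le> C" "\<And>n \<omega>. f \<omega> \<le> fs n \<omega>" "\<And>\<omega>. (\<lambda>n. fs n \<omega>) \<longlonglongrightarrow> f \<omega>"
proof -
  have uminus_Linf: "(\<lambda>\<omega>. - h \<omega>) \<in> Linf F" if h: "h \<in> Linf F" for h
  proof -
    obtain C where "\<And>\<omega>. \<bar>h \<omega>\<bar> \<le> C" using Linf_bounded[OF h] by blast
    moreover have "(\<lambda>\<omega>. - h \<omega>) \<in> borel_measurable MF"
      using Linf_measurable[OF h] by measurable
    ultimately show ?thesis by (intro LinfI) simp_all
  qed
  obtain fs C where fs: "\<And>n. fs n \<in> Linf F" "\<And>n. finite (range (fs n))"
    "\<And>n \<omega>. \<bar>fs n \<omega>\<bar> \<le> C" "\<And>n \<omega>. fs n \<omega> \<le> - f \<omega>" "\<And>\<omega>. (\<lambda>n. fs n \<omega>) \<longlonglongrightarrow> - f \<omega>"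
    using finite_range_approx_below[OF uminus_Linf[OF assms]] by blast
  show thesis
  proof (rule that[of "\<lambda>n \<omega>. - fs n \<omega>" C])
    show "(\<lambda>\<omega>. - fs n \<omega>) \<in> Linf F" for n using uminus_Linf[OF fs(1)] .
    show "finite (range (\<lambda>\<omega>. - fs n \<omega>))" for n
      using fs(2)[of n] by (simp add: image_image[symmetric, of uminus "fs n"])
    show "(\<lambda>n. - fs n \<omega>) \<longlonglongrightarrow> f \<omega>" for \<omega>
      using tendsto_minus[OF fs(5)[of \<omega>]] by simp
  qed (use fs(3,4) in \<open>simp_all add: le_minus_iff\<close>)
qed

lemma pref_mono:
  assumes f: "f \<in> Linf F" and g: "g \<in> Linf F" and le: "\<And>\<omega>. f \<omega> \<le> g \<omega>"
  shows "R g f"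
proof (rule ccontr)
  assume "\<not> R g f"
  then have "strict_pref R f g" using strict_pref_if_not_pref f g by blast
  obtain fs C where fs: "\<And>n. fs n \<in> Linf F" "\<And>n. finite (range (fs n))"
    "\<And>n \<omega>. \<bar>fs n \<omega>\<bar> \<le> C" "\<And>n \<omega>. fs n \<omega> \<le> f \<omega>" "\<And>\<omega>. (\<lambda>n. fs n \<omega>) \<longlonglongrightarrow> f \<omega>"
    using finite_range_approx_below[OF f] by blast
  obtain gs C' where gs: "\<And>n. gs n \<in> Linf F" "\<And>n. finite (range (gs n))"
    "\<And>n \<omega>. \<bar>gs n \<omega>\<bar> \<le> C'" "\<And>n \<omega>. g \<omega> \<le> gs n \<omega>" "\<And>\<omega>. (\<lambda>n. gs n \<omega>) \<longlonglongrightarrow> g \<omega>"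
    using finite_range_approx_above[OF g] by blast
  obtain N where "strict_pref R (fs (Suc N)) g"
    using PC_strict_above[OF fs(1,3,5) f g \<open>strict_pref R f g\<close>] by blast
  then obtain N' where "strict_pref R (fs (Suc N)) (gs (Suc N'))"
    using PC_strict_below[OF gs(1,3,5) g fs(1)] by blast
  moreover have "fs (Suc N) \<omega> \<le> gs (Suc N') \<omega>" for \<omega>
    using fs(4)[of "Suc N" \<omega>] le[of \<omega>] gs(4)[of \<omega> "Suc N'"] by linarith
  then have "R (gs (Suc N')) (fs (Suc N))"
    by (rule pref_mono_finite_range[OF fs(1) gs(1) fs(2) gs(2)])
  ultimately show False unfolding strict_pref_def by blast
qed

lemma const_pref: "y \<le> x \<Longrightarrow> R (const_fun x) (const_fun y)"
  by (rule pref_mono[OF const_Linf const_Linf]) (simp add: const_fun_def)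

lemma const_strict_pref:
  assumes "UNIV \<notin> nulls" "y < x"
  shows "strict_pref R (const_fun x) (const_fun y)"
proof -
  have "strict_pref R (paste UNIV (const_fun x) (const_fun 0)) (paste UNIV (const_fun y) (const_fun 0))"
    using assms by (intro SM_strict) simp_all
  then show ?thesis by simp
qed

lemma pref_if_UNIV_null: "UNIV \<in> nulls \<Longrightarrow> f \<in> Linf F \<Longrightarrow> g \<in> Linf F \<Longrightarrow> R f g"
  using nulls_iff[of UNIV] unfolding indiff_def by simp

lemma certainty_equivalent:
  assumes nonnull: "UNIV \<notin> nulls" and f: "f \<in> Linf F"
  obtains c where "indiff R f (const_fun c)"
proof -
  obtain C where C: "\<And>\<omega>. \<bar>f \<omega>\<bar> \<le> C" using Linf_bounded[OF f] by blast
  define S where "S = {x. R f (const_fun x)}"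
  have low: "- C \<le> f \<omega>" and up: "f \<omega> \<le> C" for \<omega>
    using C[of \<omega>] by (auto simp: abs_le_iff)
  have "R f (const_fun (- C))" by (rule pref_mono[OF const_Linf f]) (simp add: const_fun_def low)
  then have "- C \<in> S" by (simp add: S_def)
  have C_pref: "R (const_fun C) f" by (rule pref_mono[OF f const_Linf]) (simp add: const_fun_def up)
  have "x \<le> C" if "x \<in> S" for x
  proof (rule ccontr)
    assume "\<not> x \<le> C"
    then have "strict_pref R (const_fun x) (const_fun C)" using const_strict_pref[OF nonnull] by simp
    moreover have "R (const_fun C) (const_fun x)"
      using trans[OF C_pref] that f by (simp add: S_def)
    ultimately show False by (simp add: strict_pref_def)
  qed
  then have bdd: "bdd_above S" by (auto simp: bdd_above_def)
  have "R f (const_fun (Sup S))"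
  proof (rule ccontr)
    assume "\<not> R f (const_fun (Sup S))"
    then have "strict_pref R (const_fun (Sup S)) f"
      using strict_pref_if_not_pref[OF f const_Linf] by blast
    then obtain N where N: "\<forall>n>N. strict_pref R (const_fun (Sup S + - inverse (real (Suc n)))) f"
      using PC_strict_const_above[OF f] by blast
    let ?d = "Sup S + - inverse (real (Suc (Suc N)))"
    have "?d < Sup S" by simp
    then obtain x where "x \<in> S" "?d < x"
      using less_cSupE[of ?d S] \<open>- C \<in> S\<close> by blast
    then have "R f (const_fun ?d)"
      using const_pref[of ?d x] trans[OF _ _ f const_Linf const_Linf] by (simp add: S_def)
    then show False using N[rule_format, of "Suc N"] unfolding strict_pref_def by simp
  qed
  moreover have "R (const_fun (Sup S)) f"
  proof (rule ccontr)
    assume "\<not> R (const_fun (Sup S)) f"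
    then have "strict_pref R f (const_fun (Sup S))"
      using strict_pref_if_not_pref[OF const_Linf f] by blast
    then obtain N where N: "\<forall>n>N. strict_pref R f (const_fun (Sup S + inverse (real (Suc n))))"
      using PC_strict_const_below[OF f] by blast
    then have "Sup S + inverse (real (Suc (Suc N))) \<in> S"
      using N[rule_format, of "Suc N"] unfolding strict_pref_def S_def by simp
    from cSup_upper[OF this bdd] show False by simp
  qed
  ultimately show thesis by (intro that[of "Sup S"]) (simp add: indiff_def)
qed

lemma representation_exists: "\<exists>T. represents F T R"
proof (cases "UNIV \<in> nulls")
  case True
  then show ?thesis using pref_if_UNIV_null by (auto simp: represents_def)
next
  case False
  define T where "T f = (SOME c. indiff R f (const_fun c))" for f
  have T: "indiff R f (const_fun (T f))" if "f \<in> Linf F" for f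
    unfolding T_def by (rule someI_ex) (use certainty_equivalent[OF False that] in blast)
  have "T g \<le> T f \<longleftrightarrow> R f g" if fg: "f \<in> Linf F" "g \<in> Linf F" for f g
  proof
    assume "T g \<le> T f"
    then have "R (const_fun (T f)) g"
      using const_pref T[OF fg(2)] trans[OF _ _ const_Linf const_Linf fg(2)] unfolding indiff_def by blast
    then show "R f g"
      using T[OF fg(1)] trans[OF _ _ fg(1) const_Linf fg(2)] unfolding indiff_def by blast
  next
    assume "R f g"
    then have "R (const_fun (T f)) g"
      using T[OF fg(1)] trans[OF _ _ const_Linf fg(1,2)] unfolding indiff_def by blast
    then have "R (const_fun (T f)) (const_fun (T g))"
      using T[OF fg(2)] trans[OF _ _ const_Linf fg(2) const_Linf] unfolding indiff_def by blast
    then show "T g \<le> T f"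
      using const_strict_pref[OF False, of "T f" "T g"] unfolding strict_pref_def by force
  qed
  then show ?thesis unfolding represents_def by blast
qed

text \<open>By SM and PC, the indicator of a non-null event is strictly preferred to some constant
  1/(n+1); infinitely many disjoint events with the same n would have indicators tending to 0
  pointwise, contradicting PC.\<close>

lemma countable_disjoint_nonnull:
  assumes nonnull: "UNIV \<notin> nulls" and "disjoint \<S>" "\<S> \<subseteq> F" "\<S> \<inter> nulls = {}"
  shows "countable \<S>"
proof -
  let ?ind = "\<lambda>E. paste E (const_fun 1) (const_fun 0)"
  let ?eps = "\<lambda>n. const_fun (0 + inverse (real (Suc n)))"
  define \<S>n where "\<S>n n = {E \<in> \<S>. strict_pref R (?ind E) (?eps n)}" for n
  have "\<S> \<subseteq> (\<Union>n. \<S>n n)"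
  proof
    fix E assume E: "E \<in> \<S>"
    then have E_in_F: "E \<in> F" using assms(3) by blast
    have "strict_pref R (?ind E) (paste E (const_fun 0) (const_fun 0))"
      using E E_in_F assms(4) by (intro SM_strict) auto
    then have "strict_pref R (?ind E) (const_fun 0)" by simp
    then obtain N where "\<forall>n>N. strict_pref R (?ind E) (?eps n)"
      using PC_strict_const_below[OF paste_Linf[OF E_in_F const_Linf const_Linf]] by blast
    then show "E \<in> (\<Union>n. \<S>n n)" using E unfolding \<S>n_def by blast
  qed
  moreover have "finite (\<S>n n)" for n
  proof (rule ccontr)
    assume "infinite (\<S>n n)"
    then obtain e :: "nat \<Rightarrow> 'a set" where e: "inj e" "range e \<subseteq> \<S>n n"
      using infinite_countable_subset by blast
    then have "disjoint_family e"
      using pairwise_subset[OF assms(2)] by (intro disjoint_image_disjoint_family_on) (auto simp: \<S>n_def)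
    then have lim: "(\<lambda>k. ?ind (e k) \<omega>) \<longlonglongrightarrow> const_fun 0 \<omega>" for \<omega>
      by (rule paste_disjoint_family_tendsto)
    have e_in_F: "e k \<in> F" for k using e(2) assms(3) by (auto simp: \<S>n_def)
    have bound: "\<bar>?ind (e k) \<omega>\<bar> \<le> 1" for k \<omega> by (simp add: paste_def const_fun_def)
    have "strict_pref R (?eps n) (const_fun 0)" using const_strict_pref[OF nonnull] by simp
    then obtain N where "\<forall>k>N. strict_pref R (?eps n) (?ind (e k))"
      using PC_strict_below[OF paste_Linf[OF e_in_F const_Linf const_Linf] bound lim const_Linf const_Linf]
      by blast
    moreover have "strict_pref R (?ind (e (Suc N))) (?eps n)"
      using e(2) by (auto simp: \<S>n_def)
    ultimately show False unfolding strict_pref_def by auto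
  qed
  then have "countable (\<Union>n. \<S>n n)" by (simp add: countable_finite)
  ultimately show ?thesis by (rule countable_subset)
qed

definition cond_pref :: "'a set \<Rightarrow> ('a \<Rightarrow> real) \<Rightarrow> ('a \<Rightarrow> real) \<Rightarrow> bool" where
  "cond_pref E a b \<longleftrightarrow> (\<forall>h\<in>Linf F. R (paste E a h) (paste E b h))"

definition cond_pref_within :: "'a set set \<Rightarrow> 'a set \<Rightarrow> ('a \<Rightarrow> real) \<Rightarrow> ('a \<Rightarrow> real) \<Rightarrow> bool" where
  "cond_pref_within G X a b \<longleftrightarrow> (\<forall>B\<in>G. B \<subseteq> X \<longrightarrow> cond_pref B a b)"

lemma cond_pref_null:
  assumes "E \<in> nulls" "a \<in> Linf F" "b \<in> Linf F"
  shows "cond_pref E a b"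
  unfolding cond_pref_def
proof
  fix h assume h: "h \<in> Linf F"
  have "E \<in> F" using assms(1) nulls_iff by blast
  moreover have "R (paste E a h) h" "R h (paste E b h)"
    using assms h unfolding nulls_iff indiff_def by blast+
  ultimately show "R (paste E a h) (paste E b h)" using trans assms h by (meson paste_Linf)
qed

lemma cond_pref_empty: "a \<in> Linf F \<Longrightarrow> b \<in> Linf F \<Longrightarrow> cond_pref {} a b"
  using cond_pref_null empty_in_nulls by blast

lemma cond_pref_Un:
  assumes "E1 \<in> F" "E2 \<in> F" "E1 \<inter> E2 = {}" "cond_pref E1 a b" "cond_pref E2 a b"
    and "a \<in> Linf F" "b \<in> Linf F"
  shows "cond_pref (E1 \<union> E2) a b"
  unfolding cond_pref_def
proof
  fix h assume h: "h \<in> Linf F"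
  have "R (paste E1 a (paste E2 a h)) (paste E1 b (paste E2 a h))"
    using assms h unfolding cond_pref_def by simp
  moreover have "R (paste E2 a (paste E1 b h)) (paste E2 b (paste E1 b h))"
    using assms h unfolding cond_pref_def by simp
  moreover have "paste E1 b (paste E2 a h) = paste E2 a (paste E1 b h)"
    using assms(3) by (auto simp: paste_def fun_eq_iff)
  moreover have "paste (E1 \<union> E2) a h = paste E1 a (paste E2 a h)"
    and "paste (E1 \<union> E2) b h = paste E2 b (paste E1 b h)"
    by (auto simp: paste_def)
  ultimately show "R (paste (E1 \<union> E2) a h) (paste (E1 \<union> E2) b h)"
    using trans assms h by (metis paste_Linf)
qed

lemma cond_pref_pointwise:
  assumes "E \<in> F" "a \<in> Linf F" "b \<in> Linf F" "\<And>\<omega>. \<omega> \<in> E \<Longrightarrow> b \<omega> \<le> a \<omega>"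
  shows "cond_pref E a b"
  unfolding cond_pref_def
proof
  fix h assume h: "h \<in> Linf F"
  show "R (paste E a h) (paste E b h)"
    by (rule pref_mono[OF paste_Linf[OF assms(1,3) h] paste_Linf[OF assms(1,2) h]])
      (simp add: paste_def assms(4))
qed

lemma cond_pref_trans:
  assumes "cond_pref E a b" "cond_pref E b c" "E \<in> F" "a \<in> Linf F" "b \<in> Linf F" "c \<in> Linf F"
  shows "cond_pref E a c"
  using assms unfolding cond_pref_def by (meson paste_Linf trans)

lemma cond_pref_finite_Union:
  assumes "finite \<K>" "\<K> \<subseteq> F" "disjoint \<K>" "\<forall>E\<in>\<K>. cond_pref E a b" "a \<in> Linf F" "b \<in> Linf F"
  shows "cond_pref (\<Union>\<K>) a b \<and> \<Union>\<K> \<in> F"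
  using assms
proof (induction \<K> rule: finite_induct)
  case empty
  then show ?case using cond_pref_empty by simp
next
  case (insert E \<K>)
  then have IH: "cond_pref (\<Union>\<K>) a b" "\<Union>\<K> \<in> F"
    by (auto simp: pairwise_insert)
  have "E \<inter> \<Union>\<K> = {}"
    using insert.prems(2) insert.hyps(2) by (auto simp: pairwise_insert disjnt_def)
  then have "cond_pref (E \<union> \<Union>\<K>) a b"
    using insert.prems IH by (intro cond_pref_Un) auto
  then show ?case using insert.prems(1) IH(2) by (simp add: F.Un)
qed

lemma cond_pref_within_empty: "a \<in> Linf F \<Longrightarrow> b \<in> Linf F \<Longrightarrow> cond_pref_within G {} a b"
  by (auto simp: cond_pref_within_def cond_pref_empty)

lemma cond_pref_within_pointwise:
  assumes "G \<subseteq> F" "a \<in> Linf F" "b \<in> Linf F" "\<And>\<omega>. \<omega> \<in> X \<Longrightarrow> b \<omega> \<le> a \<omega>"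
  shows "cond_pref_within G X a b"
  unfolding cond_pref_within_def using assms by (blast intro: cond_pref_pointwise)

subsection \<open>Conditioning on a single event implies the sure-thing principle\<close>

lemma conditional_constants:
  assumes T: "represents F T R" and cond: "conditionable_on F T (sigma_of_set E)"
    and E: "E \<in> F" "E \<noteq> {}" "E \<noteq> UNIV" and \<phi>: "\<phi> \<in> Linf F"
  obtains a b where "indiff R (paste E \<phi> (const_fun 0)) (paste E (const_fun a) (const_fun 0))"
    "indiff R (paste (- E) \<phi> (const_fun 0)) (paste (- E) (const_fun b) (const_fun 0))"
    "indiff R \<phi> (paste E (const_fun a) (const_fun b))"
proof -
  obtain \<psi> where \<psi>: "\<psi> \<in> Linf (sigma_of_set E)"
    and eq: "\<forall>B \<in> sigma_of_set E. T (paste B \<phi> (const_fun 0)) = T (paste B \<psi> (const_fun 0))"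
    using cond \<phi> unfolding conditionable_on_def by blast
  obtain \<omega>1 \<omega>0 where \<omega>: "\<omega>1 \<in> E" "\<omega>0 \<notin> E" using E(2,3) by blast
  define a where "a = \<psi> \<omega>1"
  define b where "b = \<psi> \<omega>0"
  have "\<psi> \<omega> = (if \<omega> \<in> E then a else b)" for \<omega>
    using Linf_sigma_of_set_const[OF \<psi>, of \<omega> \<omega>1] Linf_sigma_of_set_const[OF \<psi>, of \<omega> \<omega>0] \<omega>
    unfolding a_def b_def by auto
  then have \<psi>_eq: "\<psi> = paste E (const_fun a) (const_fun b)"
    by (simp add: fun_eq_iff paste_def const_fun_def)
  have \<psi>_Linf: "\<psi> \<in> Linf F" using E(1) by (simp add: \<psi>_eq)
  have indiff: "indiff R (paste B \<phi> (const_fun 0)) (paste B \<psi> (const_fun 0))" if "B \<in> {E, - E, UNIV}" for B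
  proof -
    have "B \<in> sigma_of_set E" "B \<in> F" using that E(1) by (auto simp: sigma_of_set_def)
    then show ?thesis
      using eq represents_eq_iff[OF T paste_Linf[OF _ \<phi> const_Linf] paste_Linf[OF _ \<psi>_Linf const_Linf]] by blast
  qed
  show thesis
  proof (rule that[of a b])
    show "indiff R (paste E \<phi> (const_fun 0)) (paste E (const_fun a) (const_fun 0))"
      using indiff[of E] by (simp add: \<psi>_eq)
    show "indiff R (paste (- E) \<phi> (const_fun 0)) (paste (- E) (const_fun b) (const_fun 0))"
      using indiff[of "- E"] by (simp add: \<psi>_eq)
    show "indiff R \<phi> (paste E (const_fun a) (const_fun b))"
      using indiff[of UNIV] by (simp add: \<psi>_eq)
  qed
qed

lemma conditional_certainty_equivalents:
  assumes T: "represents F T R" and cond: "conditionable_on F T (sigma_of_set E)"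
    and E: "E \<in> F" "E \<notin> nulls" "- E \<notin> nulls"
  obtains \<alpha> \<beta> where "\<And>u v. u \<in> Linf F \<Longrightarrow> v \<in> Linf F \<Longrightarrow>
    indiff R (paste E u v) (paste E (const_fun (\<alpha> u)) (const_fun (\<beta> v)))"
proof -
  let ?z = "const_fun 0 :: 'a \<Rightarrow> real"
  \<comment> \<open>By SM these constants are unique, so \<open>\<alpha> u\<close> depends only on u restricted to E.\<close>
  define \<alpha> where "\<alpha> u = (SOME a. indiff R (paste E u ?z) (paste E (const_fun a) ?z))" for u
  define \<beta> where "\<beta> v = (SOME b. indiff R (paste (- E) v ?z) (paste (- E) (const_fun b) ?z))" for v
  have "E \<noteq> {}" "E \<noteq> UNIV" using E(2,3) empty_in_nulls by auto
  have "indiff R (paste E u v) (paste E (const_fun (\<alpha> u)) (const_fun (\<beta> v)))"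
    if u: "u \<in> Linf F" and v: "v \<in> Linf F" for u v
  proof -
    obtain a b where ab: "indiff R (paste E u ?z) (paste E (const_fun a) ?z)"
      "indiff R (paste (- E) v ?z) (paste (- E) (const_fun b) ?z)"
      "indiff R (paste E u v) (paste E (const_fun a) (const_fun b))"
      using conditional_constants[OF T cond E(1) \<open>E \<noteq> {}\<close> \<open>E \<noteq> UNIV\<close> paste_Linf[OF E(1) u v]] by auto
    have "indiff R (paste E u ?z) (paste E (const_fun (\<alpha> u)) ?z)"
      unfolding \<alpha>_def by (rule someI[of _ a]) (rule ab(1))
    then have "\<alpha> u = a"
      using const_eq_if_indiff[OF E(1,2) const_Linf paste_Linf[OF E(1) u const_Linf]] ab(1) by blast
    have "indiff R (paste (- E) v ?z) (paste (- E) (const_fun (\<beta> v)) ?z)"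
      unfolding \<beta>_def by (rule someI[of _ b]) (rule ab(2))
    then have "\<beta> v = b"
      using const_eq_if_indiff[OF compl_in_F[OF E(1)] E(3) const_Linf paste_Linf[OF compl_in_F[OF E(1)] v const_Linf]]
        ab(2) by blast
    show ?thesis using ab(3) \<open>\<alpha> u = a\<close> \<open>\<beta> v = b\<close> by simp
  qed
  then show thesis by (rule that)
qed

lemma ST_if_conditionable:
  assumes T: "represents F T R" and cond: "\<forall>A\<in>F. conditionable_on F T (sigma_of_set A)"
  shows "ST F R"
  unfolding ST_def
proof (intro ballI impI)
  fix f g h E h'
  assume f: "f \<in> Linf F" and g: "g \<in> Linf F" and h: "h \<in> Linf F" and E: "E \<in> F"
    and pref: "R (paste E f h) (paste E g h)" and h': "h' \<in> Linf F"
  have L: "paste E f h \<in> Linf F" "paste E g h \<in> Linf F" "paste E f h' \<in> Linf F" "paste E g h' \<in> Linf F"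
    using E f g h h' by simp_all
  consider "E \<in> nulls" | "- E \<in> nulls" | "E \<notin> nulls" "- E \<notin> nulls" by blast
  then show "R (paste E f h') (paste E g h')"
  proof cases
    case 1
    then have "R (paste E f h') h'" "R h' (paste E g h')"
      using f g h' unfolding nulls_iff indiff_def by blast+
    then show ?thesis using trans L h' by blast
  next
    case 2
    then have "indiff R (paste E u v) u" if "u \<in> Linf F" "v \<in> Linf F" for u v
      using that unfolding nulls_iff by (simp add: paste_compl)
    then have "R (paste E f h') f" "R f (paste E f h)" "R (paste E g h) g" "R g (paste E g h')"
      using f g h h' unfolding indiff_def by blast+
    then show ?thesis using pref trans[OF _ _ L(3)] trans[OF _ _ f] trans[OF _ _ L(2)] f g L by metis
  next
    case 3
    obtain \<alpha> \<beta> where ce: "\<And>u v. u \<in> Linf F \<Longrightarrow> v \<in> Linf F \<Longrightarrow>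
        indiff R (paste E u v) (paste E (const_fun (\<alpha> u)) (const_fun (\<beta> v)))"
      using conditional_certainty_equivalents[OF T cond[rule_format, OF E] E 3] by blast
    have "R (paste E (const_fun (\<alpha> f)) (const_fun (\<beta> h))) (paste E (const_fun (\<alpha> g)) (const_fun (\<beta> h)))"
      using pref ce[OF f h] ce[OF g h] trans L E unfolding indiff_def by (meson const_Linf paste_Linf)
    then have "\<alpha> g \<le> \<alpha> f" by (rule const_le_if_pref[OF E 3(1) const_Linf])
    then have "R (paste E (const_fun (\<alpha> f)) (const_fun (\<beta> h'))) (paste E (const_fun (\<alpha> g)) (const_fun (\<beta> h')))"
      by (rule paste_const_pref[OF E _ const_Linf])
    then show ?thesis
      using ce[OF f h'] ce[OF g h'] trans L E unfolding indiff_def by (meson const_Linf paste_Linf)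
  qed
qed

end

section \<open>Conditioning under the sure-thing principle\<close>

locale st_preference = sm_pc_preference +
  assumes ST: "ST F R"
begin

lemma cond_pref_if_pref:
  assumes "E \<in> F" "a \<in> Linf F" "b \<in> Linf F" "h \<in> Linf F" "R (paste E a h) (paste E b h)"
  shows "cond_pref E a b"
  using ST assms unfolding ST_def cond_pref_def by blast

lemma cond_pref_total:
  assumes "E \<in> F" "a \<in> Linf F" "b \<in> Linf F"
  shows "cond_pref E a b \<or> cond_pref E b a"
proof -
  have "R (paste E a (const_fun 0)) (paste E b (const_fun 0))
      \<or> R (paste E b (const_fun 0)) (paste E a (const_fun 0))"
    using assms by (intro total) simp_all
  then show ?thesis
    using cond_pref_if_pref[OF assms const_Linf] cond_pref_if_pref[OF assms(1,3,2) const_Linf] by blast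
qed

lemma cond_pref_incseq_Union:
  assumes E: "\<And>n. E n \<in> F" "incseq E" and pref: "\<And>n. cond_pref (E n) a b"
    and a: "a \<in> Linf F" and b: "b \<in> Linf F"
  shows "cond_pref (\<Union>n. E n) a b"
proof -
  have U: "(\<Union>n. E n) \<in> F" using E(1) by (intro F.countable_nat_UN) auto
  obtain C where C: "\<And>\<omega>. \<bar>a \<omega>\<bar> \<le> C" "\<And>\<omega>. \<bar>b \<omega>\<bar> \<le> C"
    using Linf_common_bound[OF a b] by blast
  have bound: "\<bar>paste (E n) a b \<omega>\<bar> \<le> C" for n \<omega>
    using C by (simp add: paste_def)
  have lim: "(\<lambda>n. paste (E n) a b \<omega>) \<longlonglongrightarrow> paste (\<Union>n. E n) a b \<omega>" for \<omega>
  proof (cases "\<omega> \<in> (\<Union>n. E n)")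
    case True
    then obtain k where "\<omega> \<in> E k" by blast
    then have "\<omega> \<in> E n" if "k \<le> n" for n using monoD[OF E(2) that] by blast
    then have "\<forall>\<^sub>F n in sequentially. paste (E n) a b \<omega> = paste (\<Union>n. E n) a b \<omega>"
      using True by (intro eventually_sequentiallyI[of k]) (simp add: paste_def)
    then show ?thesis by (rule tendsto_eventually)
  next
    case False
    then show ?thesis by (simp add: paste_def)
  qed
  have "R (paste (E n) a b) (paste (E n) b b)" for n
    using pref[of n] b unfolding cond_pref_def by blast
  then have "R (paste (\<Union>n. E n) a b) b"
    using pref_limit_below[OF paste_Linf[OF E(1) a b] bound lim paste_Linf[OF U a b] b] by simp
  then show ?thesis using cond_pref_if_pref[OF U a b b] by simp
qed

lemma cond_pref_countable_Union:
  assumes "countable \<K>" "\<K> \<subseteq> F" "disjoint \<K>" "\<forall>E\<in>\<K>. cond_pref E a b"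
    and "a \<in> Linf F" "b \<in> Linf F"
  shows "cond_pref (\<Union>\<K>) a b"
proof (cases "\<K> = {}")
  case True
  then show ?thesis using cond_pref_empty assms by simp
next
  case False
  define E where "E n = \<Union>(from_nat_into \<K> ` {..n})" for n
  have "cond_pref (E n) a b \<and> E n \<in> F" for n
  proof -
    have sub: "from_nat_into \<K> ` {..n} \<subseteq> \<K>" using from_nat_into[OF False] by blast
    show ?thesis
      unfolding E_def
      by (rule cond_pref_finite_Union[OF _ order_trans[OF sub assms(2)] pairwise_subset[OF assms(3) sub]
            _ assms(5,6)])
        (use sub assms(4) in blast)+
  qed
  moreover have "incseq E"
    unfolding E_def by (intro monoI Union_mono image_mono) auto
  moreover have "(\<Union>n. E n) = (\<Union>n. from_nat_into \<K> n)"
  proof (intro equalityI subsetI)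
    fix x assume "x \<in> (\<Union>n. E n)"
    then show "x \<in> (\<Union>n. from_nat_into \<K> n)" unfolding E_def by blast
  next
    fix x assume "x \<in> (\<Union>n. from_nat_into \<K> n)"
    then obtain n where "x \<in> from_nat_into \<K> n" by blast
    then show "x \<in> (\<Union>n. E n)" unfolding E_def by (intro UN_I[of n]) auto
  qed
  moreover have "(\<Union>n. from_nat_into \<K> n) = \<Union>\<K>"
    using range_from_nat_into[OF False assms(1)] by simp
  ultimately show ?thesis using cond_pref_incseq_Union[of E a b] assms by simp
qed

lemma cond_pref_within_UN:
  fixes X :: "nat \<Rightarrow> 'a set"
  assumes G: "sub_sigma G F" and X: "\<And>k. X k \<in> G" "\<And>k. cond_pref_within G (X k) a b"
    and a: "a \<in> Linf F" and b: "b \<in> Linf F"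
  shows "cond_pref_within G (\<Union>k. X k) a b"
  unfolding cond_pref_within_def
proof (intro ballI impI)
  interpret G: sigma_algebra UNIV G using G by (simp add: sub_sigma_def)
  have GF: "G \<subseteq> F" using G by (simp add: sub_sigma_def)
  fix B assume B: "B \<in> G" "B \<subseteq> (\<Union>k. X k)"
  define D where "D = disjointed (\<lambda>k. B \<inter> X k)"
  have "range D \<subseteq> G"
    unfolding D_def using B(1) X(1) by (intro G.range_disjointed_sets) auto
  have "D k \<subseteq> X k" for k
    using disjointed_subset[of "\<lambda>k. B \<inter> X k" k] unfolding D_def by blast
  then have "\<forall>E\<in>range D. cond_pref E a b"
    using X(2) \<open>range D \<subseteq> G\<close> unfolding cond_pref_within_def by blast
  moreover have "disjoint (range D)"
    unfolding D_def by (intro disjoint_family_on_disjoint_image disjoint_family_disjointed)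
  ultimately have "cond_pref (\<Union>(range D)) a b"
    using \<open>range D \<subseteq> G\<close> GF by (intro cond_pref_countable_Union[OF countable_image[OF countableI_type] _ _ _ a b]) auto
  moreover have "\<Union>(range D) = B"
    using B(2) unfolding D_def UN_disjointed_eq by blast
  ultimately show "cond_pref B a b" by simp
qed

lemma cond_pref_within_countable_Union:
  assumes G: "sub_sigma G F" and "countable \<X>" "\<X> \<subseteq> G" "\<forall>X\<in>\<X>. cond_pref_within G X a b"
    and a: "a \<in> Linf F" and b: "b \<in> Linf F"
  shows "cond_pref_within G (\<Union>\<X>) a b"
proof (cases "\<X> = {}")
  case True
  then show ?thesis using cond_pref_within_empty a b by simp
next
  case False
  have "from_nat_into \<X> k \<in> \<X>" for k using from_nat_into[OF False] .
  then have "cond_pref_within G (\<Union>k. from_nat_into \<X> k) a b"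
    using assms(3,4) by (intro cond_pref_within_UN[OF G _ _ a b]) blast+
  moreover have "\<Union>\<X> = (\<Union>k. from_nat_into \<X> k)"
    using range_from_nat_into[OF False assms(2)] by simp
  ultimately show ?thesis by simp
qed

text \<open>The exhaustion step of the Hahn decomposition: removing from D a maximal disjoint family
  of G-events on which b is not preferred to a leaves a part on which b is preferred throughout;
  that part is non-null since the removed part already favours a.\<close>

lemma exists_nonnull_reversed_subset:
  assumes nonnull: "UNIV \<notin> nulls" and G: "sub_sigma G F" and a: "a \<in> Linf F" and b: "b \<in> Linf F"
    and D: "D \<in> G" "\<not> cond_pref D a b"
  obtains D' where "D' \<in> G" "D' \<subseteq> D" "D' \<notin> nulls" "cond_pref_within G D' b a"
proof -
  interpret G: sigma_algebra UNIV G using G by (simp add: sub_sigma_def)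
  have GF: "G \<subseteq> F" using G by (simp add: sub_sigma_def)
  define \<C> where "\<C> = {E \<in> G. E \<subseteq> D \<and> \<not> cond_pref E b a}"
  obtain \<S> where \<S>: "\<S> \<subseteq> \<C>" "disjoint \<S>" "\<And>B. B \<in> \<C> \<Longrightarrow> \<forall>C\<in>\<S>. disjnt B C \<Longrightarrow> B \<in> \<S>"
    using maximal_disjoint_subfamily[of \<C>] by blast
  have "\<S> \<subseteq> F" using \<S>(1) GF unfolding \<C>_def by blast
  moreover have "\<S> \<inter> nulls = {}"
    using \<S>(1) cond_pref_null[OF _ b a] unfolding \<C>_def by blast
  ultimately have "countable \<S>" by (rule countable_disjoint_nonnull[OF nonnull \<S>(2)])
  define M where "M = \<Union>\<S>"
  have "M \<in> G" "M \<subseteq> D"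
    using G.countable_Union[OF \<open>countable \<S>\<close>] \<S>(1) unfolding M_def \<C>_def by blast+
  have "cond_pref M a b"
    unfolding M_def
  proof (rule cond_pref_countable_Union[OF \<open>countable \<S>\<close> \<open>\<S> \<subseteq> F\<close> \<S>(2) _ a b])
    show "\<forall>E\<in>\<S>. cond_pref E a b"
      using \<S>(1) \<open>\<S> \<subseteq> F\<close> cond_pref_total[OF _ a b] unfolding \<C>_def by blast
  qed
  define D' where "D' = D - M"
  have "D' \<in> G" using D(1) \<open>M \<in> G\<close> unfolding D'_def by blast
  moreover have "cond_pref_within G D' b a"
    unfolding cond_pref_within_def
  proof (intro ballI impI)
    fix B assume B: "B \<in> G" "B \<subseteq> D'"
    show "cond_pref B b a"
    proof (rule ccontr)
      assume "\<not> cond_pref B b a"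
      moreover have "\<forall>C\<in>\<S>. disjnt B C" using B(2) unfolding D'_def M_def disjnt_def by blast
      ultimately have "B \<in> \<S>" using \<S>(3) B unfolding \<C>_def D'_def by blast
      then have "B = {}" using B(2) unfolding D'_def M_def by blast
      then show False using \<open>\<not> cond_pref B b a\<close> cond_pref_empty[OF b a] by simp
    qed
  qed
  moreover have "D' \<notin> nulls"
  proof
    assume "D' \<in> nulls"
    then have "cond_pref (M \<union> D') a b"
      using \<open>M \<in> G\<close> \<open>D' \<in> G\<close> GF \<open>cond_pref M a b\<close> cond_pref_null a b
      by (intro cond_pref_Un) (auto simp: D'_def)
    moreover have "M \<union> D' = D" using \<open>M \<subseteq> D\<close> unfolding D'_def by blast
    ultimately show False using D(2) by simp
  qed
  ultimately show thesis using that[of D'] by (simp add: D'_def)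
qed

lemma hahn_decomposition:
  assumes nonnull: "UNIV \<notin> nulls" and G: "sub_sigma G F" and a: "a \<in> Linf F" and b: "b \<in> Linf F"
  obtains P where "P \<in> G" "cond_pref_within G P a b" "cond_pref_within G (- P) b a"
proof -
  interpret G: sigma_algebra UNIV G using G by (simp add: sub_sigma_def)
  have GF: "G \<subseteq> F" using G by (simp add: sub_sigma_def)
  define \<C> where "\<C> = {C \<in> G. C \<notin> nulls \<and> cond_pref_within G C b a}"
  obtain \<S> where \<S>: "\<S> \<subseteq> \<C>" "disjoint \<S>" "\<And>B. B \<in> \<C> \<Longrightarrow> \<forall>C\<in>\<S>. disjnt B C \<Longrightarrow> B \<in> \<S>"
    using maximal_disjoint_subfamily[of \<C>] by blast
  have "\<S> \<subseteq> F" "\<S> \<inter> nulls = {}" using \<S>(1) GF unfolding \<C>_def by blast+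
  then have "countable \<S>" by (rule countable_disjoint_nonnull[OF nonnull \<S>(2)])
  define N where "N = \<Union>\<S>"
  have "N \<in> G"
    using G.countable_Union[OF \<open>countable \<S>\<close>] \<S>(1) unfolding N_def \<C>_def by blast
  have "cond_pref_within G N b a"
    using \<S>(1) unfolding N_def \<C>_def
    by (intro cond_pref_within_countable_Union[OF G \<open>countable \<S>\<close> _ _ b a]) blast+
  moreover have "cond_pref_within G (- N) a b"
    unfolding cond_pref_within_def
  proof (intro ballI impI)
    fix D assume D: "D \<in> G" "D \<subseteq> - N"
    show "cond_pref D a b"
    proof (rule ccontr)
      assume "\<not> cond_pref D a b"
      then obtain D' where D': "D' \<in> G" "D' \<subseteq> D" "D' \<notin> nulls" "cond_pref_within G D' b a"
        using exists_nonnull_reversed_subset[OF nonnull G a b D(1)] by blast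
      then have "D' \<in> \<S>"
        using D(2) by (intro \<S>(3)) (auto simp: \<C>_def N_def disjnt_def)
      then have "D' = {}" using D'(2) D(2) unfolding N_def by blast
      then show False using D'(3) empty_in_nulls by simp
    qed
  qed
  moreover have "- N \<in> G" using G.compl_sets[OF \<open>N \<in> G\<close>] by (simp add: Compl_eq_Diff_UNIV)
  ultimately show thesis using that[of "- N"] by simp
qed

text \<open>D q is a G-measurable version of the event where the conditional value of f is at least q;
  K bounds f.\<close>

definition cond_level_sets :: "'a set set \<Rightarrow> ('a \<Rightarrow> real) \<Rightarrow> real \<Rightarrow> (real \<Rightarrow> 'a set) \<Rightarrow> bool" where
  "cond_level_sets G f K D \<longleftrightarrow> rat_level_family K D \<and> (\<forall>q. D q \<in> G) \<and>
     (\<forall>q\<in>\<rat>. cond_pref_within G (D q) f (const_fun q) \<and> cond_pref_within G (- D q) (const_fun q) f)"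

lemma threshold_sets_exist:
  assumes nonnull: "UNIV \<notin> nulls" and G: "sub_sigma G F" and f: "f \<in> Linf F"
    and K: "\<And>\<omega>. \<bar>f \<omega>\<bar> \<le> K"
  obtains P where "\<And>q. P q \<in> G"
    "\<And>q. cond_pref_within G (P q) f (const_fun q)" "\<And>q. cond_pref_within G (- P q) (const_fun q) f"
    "\<And>q. q \<le> - K \<Longrightarrow> P q = UNIV" "\<And>q. K < q \<Longrightarrow> P q = {}"
proof -
  interpret G: sigma_algebra UNIV G using G by (simp add: sub_sigma_def)
  have GF: "G \<subseteq> F" using G by (simp add: sub_sigma_def)
  have low: "- K \<le> f \<omega>" and up: "f \<omega> \<le> K" for \<omega>
    using K[of \<omega>] by (auto simp: abs_le_iff)
  have "\<exists>P. P \<in> G \<and> cond_pref_within G P f (const_fun q) \<and> cond_pref_within G (- P) (const_fun q) f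
      \<and> (q \<le> - K \<longrightarrow> P = UNIV) \<and> (K < q \<longrightarrow> P = {})" for q
  proof -
    consider "q \<le> - K" | "K < q" | "- K < q" "q \<le> K" by linarith
    then show ?thesis
    proof cases
      case 1
      then have "const_fun q \<omega> \<le> f \<omega>" for \<omega> using low[of \<omega>] by (simp add: const_fun_def)
      then have "cond_pref_within G UNIV f (const_fun q)"
        by (intro cond_pref_within_pointwise[OF GF f const_Linf])
      then show ?thesis
        using 1 K[of undefined] cond_pref_within_empty[OF const_Linf f] by (intro exI[of _ UNIV]) auto
    next
      case 2
      then have "f \<omega> \<le> const_fun q \<omega>" for \<omega> using up[of \<omega>] by (simp add: const_fun_def)
      then have "cond_pref_within G UNIV (const_fun q) f"
        by (intro cond_pref_within_pointwise[OF GF const_Linf f])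
      then show ?thesis
        using 2 K[of undefined] cond_pref_within_empty[OF f const_Linf] by (intro exI[of _ "{}"]) auto
    next
      case 3
      then show ?thesis
        using hahn_decomposition[OF nonnull G f const_Linf, of q] by (metis not_le)
    qed
  qed
  then obtain P where "\<forall>q. P q \<in> G \<and> cond_pref_within G (P q) f (const_fun q)
      \<and> cond_pref_within G (- P q) (const_fun q) f \<and> (q \<le> - K \<longrightarrow> P q = UNIV) \<and> (K < q \<longrightarrow> P q = {})"
    by metis
  then show thesis using that by blast
qed

lemma cond_level_sets_exist:
  assumes nonnull: "UNIV \<notin> nulls" and G: "sub_sigma G F" and f: "f \<in> Linf F"
    and K: "\<And>\<omega>. \<bar>f \<omega>\<bar> \<le> K"
  obtains D where "cond_level_sets G f K D"
proof -
  interpret G: sigma_algebra UNIV G using G by (simp add: sub_sigma_def)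
  have GF: "G \<subseteq> F" using G by (simp add: sub_sigma_def)
  obtain P where P: "\<And>q. P q \<in> G"
    "\<And>q. cond_pref_within G (P q) f (const_fun q)" "\<And>q. cond_pref_within G (- P q) (const_fun q) f"
    "\<And>q. q \<le> - K \<Longrightarrow> P q = UNIV" "\<And>q. K < q \<Longrightarrow> P q = {}"
    using threshold_sets_exist[OF nonnull G f K] by blast
  define I where "I q = {r \<in> \<rat>. r \<le> q}" for q :: real
  define D where "D q = (\<Inter>r\<in>I q. P r)" for q
  have countable_I: "countable (I q)" for q
    unfolding I_def by (rule countable_subset[OF _ countable_rat]) blast
  have "rat_level_family K D"
    unfolding rat_level_family_def
  proof (intro conjI allI ballI impI)
    show "antimono D" unfolding D_def I_def by (intro antimonoI) auto
    show "D q = UNIV" if "q \<le> - K" for q using that P(4) unfolding D_def I_def by auto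
    show "D q = {}" if "q \<in> \<rat>" "K < q" for q
      using that P(5)[of q] unfolding D_def I_def by blast
  qed
  moreover have "D q \<in> G" for q
    unfolding D_def using P(1) by (intro G.countable_INT'' G.top countable_I)
  moreover have "cond_pref_within G (D q) f (const_fun q)" if "q \<in> \<rat>" for q
    using P(2)[of q] that unfolding cond_pref_within_def D_def I_def by blast
  moreover have "cond_pref_within G (- D q) (const_fun q) f" for q
  proof -
    have within: "cond_pref_within G (- P r) (const_fun q) f" if "r \<in> I q" for r
      unfolding cond_pref_within_def
    proof (intro ballI impI)
      fix B assume B: "B \<in> G" "B \<subseteq> - P r"
      then have "B \<in> F" using GF by blast
      moreover from this have "cond_pref B (const_fun q) (const_fun r)"
        using that by (intro cond_pref_pointwise[OF _ const_Linf const_Linf]) (auto simp: I_def const_fun_def)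
      moreover have "cond_pref B (const_fun r) f" using P(3)[of r] B unfolding cond_pref_within_def by blast
      ultimately show "cond_pref B (const_fun q) f"
        using cond_pref_trans[OF _ _ _ const_Linf const_Linf f] by blast
    qed
    have "(\<lambda>r. - P r) ` I q \<subseteq> G"
      using P(1) G.compl_sets by (auto simp: Compl_eq_Diff_UNIV)
    then have "cond_pref_within G (\<Union>((\<lambda>r. - P r) ` I q)) (const_fun q) f"
      using within by (intro cond_pref_within_countable_Union[OF G countable_image[OF countable_I] _ _ const_Linf f]) auto
    moreover have "- D q = \<Union>((\<lambda>r. - P r) ` I q)" unfolding D_def by auto
    ultimately show ?thesis by simp
  qed
  ultimately show thesis using that[of D] by (simp add: cond_level_sets_def)
qed

lemma cond_level_sets_band:
  assumes levels: "cond_level_sets G f K D" and G: "sub_sigma G F" and f: "f \<in> Linf F"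
    and r: "r \<in> \<rat>" and d: "d \<in> \<rat>" "0 < d"
  shows "cond_pref_within G (D r - D (r + d)) f (\<lambda>\<omega>. level_sup D \<omega> - d)"
    and "cond_pref_within G (D r - D (r + d)) (\<lambda>\<omega>. level_sup D \<omega> + d) f"
proof -
  have GF: "G \<subseteq> F" using G by (simp add: sub_sigma_def)
  have rat_levels: "rat_level_family K D" and "\<And>q. D q \<in> G"
    using levels by (simp_all add: cond_level_sets_def)
  then have g: "level_sup D \<in> Linf F"
    using G level_sup_Linf Linf_mono by (metis sub_sigma_def)
  have rd: "r + d \<in> \<rat>" using r d by simp
  have band: "r \<le> level_sup D \<omega>" "level_sup D \<omega> \<le> r + d" if "\<omega> \<in> D r - D (r + d)" for \<omega>
    using that level_sup_ge[OF rat_levels r] level_sup_le[OF rat_levels rd] by auto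
  show "cond_pref_within G (D r - D (r + d)) f (\<lambda>\<omega>. level_sup D \<omega> - d)"
    unfolding cond_pref_within_def
  proof (intro ballI impI)
    fix B assume B: "B \<in> G" "B \<subseteq> D r - D (r + d)"
    have "cond_pref B f (const_fun r)"
      using levels r B unfolding cond_level_sets_def cond_pref_within_def by blast
    moreover have "cond_pref B (const_fun r) (\<lambda>\<omega>. level_sup D \<omega> - d)"
    proof (rule cond_pref_pointwise[OF _ const_Linf Linf_diff_const[OF g]])
      show "B \<in> F" using B GF by blast
      show "level_sup D \<omega> - d \<le> const_fun r \<omega>" if "\<omega> \<in> B" for \<omega>
        using band(2)[of \<omega>] B(2) that by (auto simp: const_fun_def)
    qed
    ultimately show "cond_pref B f (\<lambda>\<omega>. level_sup D \<omega> - d)"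
      using B GF by (intro cond_pref_trans[OF _ _ _ f const_Linf Linf_diff_const[OF g]]) auto
  qed
  show "cond_pref_within G (D r - D (r + d)) (\<lambda>\<omega>. level_sup D \<omega> + d) f"
    unfolding cond_pref_within_def
  proof (intro ballI impI)
    fix B assume B: "B \<in> G" "B \<subseteq> D r - D (r + d)"
    have "cond_pref B (const_fun (r + d)) f"
      using levels rd B unfolding cond_level_sets_def cond_pref_within_def by blast
    moreover have "cond_pref B (\<lambda>\<omega>. level_sup D \<omega> + d) (const_fun (r + d))"
    proof (rule cond_pref_pointwise[OF _ Linf_add_const[OF g] const_Linf])
      show "B \<in> F" using B GF by blast
      show "const_fun (r + d) \<omega> \<le> level_sup D \<omega> + d" if "\<omega> \<in> B" for \<omega>
        using band(1)[of \<omega>] B(2) that by (auto simp: const_fun_def)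
    qed
    ultimately show "cond_pref B (\<lambda>\<omega>. level_sup D \<omega> + d) f"
      using B GF by (intro cond_pref_trans[OF _ _ _ Linf_add_const[OF g] const_Linf f]) auto
  qed
qed

lemma cond_level_sets_approx:
  assumes levels: "cond_level_sets G f K D" and G: "sub_sigma G F" and f: "f \<in> Linf F"
    and A: "A \<in> G" and d: "d \<in> \<rat>" "0 < d"
  shows "cond_pref A f (\<lambda>\<omega>. level_sup D \<omega> - d)" "cond_pref A (\<lambda>\<omega>. level_sup D \<omega> + d) f"
proof -
  interpret G: sigma_algebra UNIV G using G by (simp add: sub_sigma_def)
  have rat_levels: "rat_level_family K D" and DG: "\<And>q. D q \<in> G"
    using levels by (simp_all add: cond_level_sets_def)
  then have g: "level_sup D \<in> Linf F"
    using G level_sup_Linf Linf_mono by (metis sub_sigma_def)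
  let ?bands = "(\<lambda>r. D r - D (r + d)) ` \<rat>"
  have bands: "countable ?bands" "?bands \<subseteq> G"
    using countable_rat DG by auto
  have "\<Union>?bands = UNIV"
    using level_band_exists[OF rat_levels d] by blast
  moreover have "cond_pref_within G (\<Union>?bands) f (\<lambda>\<omega>. level_sup D \<omega> - d)"
    using cond_level_sets_band(1)[OF levels G f _ d]
    by (intro cond_pref_within_countable_Union[OF G bands _ f Linf_diff_const[OF g]]) blast
  moreover have "cond_pref_within G (\<Union>?bands) (\<lambda>\<omega>. level_sup D \<omega> + d) f"
    using cond_level_sets_band(2)[OF levels G f _ d]
    by (intro cond_pref_within_countable_Union[OF G bands _ Linf_add_const[OF g] f]) blast
  ultimately show "cond_pref A f (\<lambda>\<omega>. level_sup D \<omega> - d)" "cond_pref A (\<lambda>\<omega>. level_sup D \<omega> + d) f"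
    using A unfolding cond_pref_within_def by simp_all
qed

lemma cond_level_sets_conditional:
  assumes levels: "cond_level_sets G f K D" and G: "sub_sigma G F" and f: "f \<in> Linf F"
    and A: "A \<in> G"
  shows "indiff R (paste A f (const_fun 0)) (paste A (level_sup D) (const_fun 0))"
proof -
  let ?z = "const_fun 0 :: 'a \<Rightarrow> real" and ?g = "level_sup D" and ?d = "\<lambda>m. inverse (real (Suc m))"
  have rat_levels: "rat_level_family K D"
    using levels by (simp add: cond_level_sets_def)
  then have g: "?g \<in> Linf F"
    using G level_sup_Linf Linf_mono levels by (metis cond_level_sets_def sub_sigma_def)
  have AF: "A \<in> F" using A G by (auto simp: sub_sigma_def)
  have d: "?d m \<in> \<rat>" "0 < ?d m" "\<bar>?d m\<bar> \<le> 1" for m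
    by (simp_all add: inverse_le_1_iff)
  define lo where "lo m = paste A (\<lambda>\<omega>. ?g \<omega> - ?d m) ?z" for m
  define hi where "hi m = paste A (\<lambda>\<omega>. ?g \<omega> + ?d m) ?z" for m
  have shift_bound: "\<bar>?g \<omega> + e\<bar> \<le> \<bar>K\<bar> + 2" if "\<bar>e\<bar> \<le> 1" for e \<omega>
    using level_sup_bounded[OF rat_levels, of \<omega>] abs_triangle_ineq[of "?g \<omega>" e] that by linarith
  have bounds: "\<bar>lo m \<omega>\<bar> \<le> \<bar>K\<bar> + 2" "\<bar>hi m \<omega>\<bar> \<le> \<bar>K\<bar> + 2" for m \<omega>
    using shift_bound[of "- ?d m" \<omega>] shift_bound[of "?d m" \<omega>] d(3)[of m]
    by (simp_all add: lo_def hi_def paste_def const_fun_def)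
  have lims: "(\<lambda>m. lo m \<omega>) \<longlonglongrightarrow> paste A ?g ?z \<omega>" "(\<lambda>m. hi m \<omega>) \<longlonglongrightarrow> paste A ?g ?z \<omega>" for \<omega>
    using tendsto_diff[OF tendsto_const LIMSEQ_inverse_real_of_nat, of "?g \<omega>"]
      tendsto_add[OF tendsto_const LIMSEQ_inverse_real_of_nat, of "?g \<omega>"]
    by (simp_all add: lo_def hi_def paste_def)
  have Ls: "lo m \<in> Linf F" "hi m \<in> Linf F" for m
    using AF Linf_diff_const[OF g] Linf_add_const[OF g] by (simp_all add: lo_def hi_def)
  have prefs: "R (paste A f ?z) (lo m)" "R (hi m) (paste A f ?z)" for m
    using cond_level_sets_approx[OF levels G f A d(1,2)] unfolding cond_pref_def lo_def hi_def by simp_all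
  have gA: "paste A ?g ?z \<in> Linf F" and fA: "paste A f ?z \<in> Linf F"
    using AF f g by simp_all
  show ?thesis
    unfolding indiff_def
    using pref_limit_above[OF Ls(1) bounds(1) lims(1) gA fA prefs(1)]
      pref_limit_below[OF Ls(2) bounds(2) lims(2) gA fA prefs(2)] by blast
qed

lemma conditionable_on_sub_sigma:
  assumes T: "represents F T R" and G: "sub_sigma G F"
  shows "conditionable_on F T G"
  unfolding conditionable_on_def
proof
  fix f assume f: "f \<in> Linf F"
  have GF: "G \<subseteq> F" and sigma_G: "sigma_algebra UNIV G" using G by (simp_all add: sub_sigma_def)
  have "\<exists>g\<in>Linf G. \<forall>A\<in>G. indiff R (paste A f (const_fun 0)) (paste A g (const_fun 0))"
  proof (cases "UNIV \<in> nulls")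
    case True
    have "indiff R (paste A f (const_fun 0)) (paste A (const_fun 0) (const_fun 0))" if "A \<in> G" for A
    proof -
      have L: "paste A f (const_fun 0) \<in> Linf F" "paste A (const_fun 0) (const_fun 0) \<in> Linf F"
        using that GF f by auto
      show ?thesis
        using pref_if_UNIV_null[OF True L] pref_if_UNIV_null[OF True L(2,1)] unfolding indiff_def by blast
    qed
    then show ?thesis using const_fun_Linf[OF sigma_G] by blast
  next
    case False
    obtain K where "\<And>\<omega>. \<bar>f \<omega>\<bar> \<le> K" using Linf_bounded[OF f] by blast
    then obtain D where D: "cond_level_sets G f K D"
      using cond_level_sets_exist[OF False G f] by blast
    then have "level_sup D \<in> Linf G"
      using sigma_G level_sup_Linf unfolding cond_level_sets_def by blast
    then show ?thesis using cond_level_sets_conditional[OF D G f] by blast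
  qed
  then obtain g where g: "g \<in> Linf G"
    and indiff: "\<forall>A\<in>G. indiff R (paste A f (const_fun 0)) (paste A g (const_fun 0))" by blast
  have "T (paste A f (const_fun 0)) = T (paste A g (const_fun 0))" if "A \<in> G" for A
  proof -
    have "A \<in> F" using that GF by blast
    then show ?thesis
      using indiff that represents_eq_iff[OF T paste_Linf[OF _ f const_Linf] paste_Linf[OF _ Linf_mono[OF GF g] const_Linf]]
      by blast
  qed
  then show "\<exists>g\<in>Linf G. \<forall>A\<in>G. T (paste A f (const_fun 0)) = T (paste A g (const_fun 0))"
    using g by blast
qed

end

theorem mainTheorem2:
  fixes F :: "'a set set"
    and R :: "('a \<Rightarrow> real) \<Rightarrow> ('a \<Rightarrow> real) \<Rightarrow> bool"
  assumes "sigma_algebra (UNIV :: 'a set) F"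
    and "preference_order F R"
    and "SM F R"
    and "PC F R"
  shows "(ST F R \<longleftrightarrow>
           (\<forall>T. represents F T R \<longrightarrow> (\<forall>G. sub_sigma G F \<longrightarrow> conditionable_on F T G)))
       \<and> (ST F R \<longleftrightarrow>
           (\<forall>T. represents F T R \<longrightarrow> (\<forall>A \<in> F. conditionable_on F T (sigma_of_set A))))"
proof -
  interpret sm_pc_preference F R
    using assms by (rule sm_pc_preference.intro)
  have i_ii: "\<forall>T. represents F T R \<longrightarrow> (\<forall>G. sub_sigma G F \<longrightarrow> conditionable_on F T G)" if "ST F R"
  proof -
    interpret st_preference F R
      using that by unfold_locales
    show ?thesis using conditionable_on_sub_sigma by blast
  qed
  have ii_iii: "\<forall>T. represents F T R \<longrightarrow> (\<forall>A \<in> F. conditionable_on F T (sigma_of_set A))"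
    if "\<forall>T. represents F T R \<longrightarrow> (\<forall>G. sub_sigma G F \<longrightarrow> conditionable_on F T G)"
    using that sub_sigma_sigma_of_set[OF assms(1)] by blast
  have iii_i: "ST F R" if "\<forall>T. represents F T R \<longrightarrow> (\<forall>A \<in> F. conditionable_on F T (sigma_of_set A))"
    using that representation_exists ST_if_conditionable by blast
  show ?thesis using i_ii ii_iii iii_i by blast
qed

end
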